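(* Let $\mathcal{M}=(\mathbf A,\perp,\{\mathsf{t},\mathsf{f}\})$ be an $\mathfrak{N}_w$-model and let $x,y$ be distinct propositional variables. Then $h((x\circ y)\Rightarrow(x\Rightarrow y))\perp\mathsf{f}$ for every homomorphism $h$ from the formula algebra into $\mathbf A$ if and only if $\mathbf A$ is trivial (has exactly one element).
   Context: Formulas are built from variables using binary $\otimes,\circ$ and unary ${}^{*}$; in formulas and algebras, $\varphi\Rightarrow\psi:=(\varphi\circ\psi^{*})^{*}$, $\varphi\Leftrightarrow\psi:=(\varphi\Rightarrow\psi)\otimes(\psi\Rightarrow\varphi)$, $\varphi\not\Leftrightarrow\psi:=(\varphi\Leftrightarrow\psi)^{*}$, $\varphi\not\Leftrightarrow\psi\not\Leftrightarrow\chi:=((\varphi\not\Leftrightarrow\psi)\otimes(\varphi\not\Leftrightarrow\chi))\otimes(\psi\not\Leftrightarrow\chi)$. A weak $\mathcal{N}$-algebra is an algebra $(A,\otimes,\circ,{}^{*})$ of type $(2,2,1)$ with $\otimes,\circ$ commutative, $x^{**}=x$, and $(x\otimes y)\circ z=(x\otimes z)\circ y$. With $\mathsf{t}\ne\mathsf{f}$ symbols not in $A$, $\overline A=A\cup\{\mathsf{t},\mathsf{f}\}$, an $\mathfrak{N}_w$-model is $(\mathbf A,\perp,\{\mathsf{t},\mathsf{f}\})$, $\mathbf A$ a weak $\mathcal{N}$-algebra, $\perp\subseteq\overline A\times\overline A$, such that for all $x,y,z\in A$: (a) $x\perp x^{*}$; (b) $x\perp y^{*}$ and $y\perp x^{*}$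 imply $x=y$; (c) $x\perp y$ iff $x\circ y\perp\mathsf{t}$; (d) $x\perp\mathsf{t}$ iff $x^{*}\perp\mathsf{f}$; (e) $x\perp\mathsf{f}$ and $y\perp\mathsf{f}$ iff $x\otimes y\perp\mathsf{f}$; (f) $(x\circ y^{*})^{*}\perp(x\circ y)^{*}$; (g) $x\perp y$ and $x\perp\mathsf{f}$ imply $y\perp\mathsf{t}$; (h) $(x\not\Leftrightarrow y\not\Leftrightarrow z)\perp((x\Rightarrow y)\Rightarrow((y\Rightarrow z)\Rightarrow(x\Rightarrow z)))^{*}$. *)

theory Defs
  imports Main
begin

datatype 'a ext = Elem 'a | T | F

definition imp :: "('a \<Rightarrow> 'a \<Rightarrow> 'a) \<Rightarrow> ('a \<Rightarrow> 'a) \<Rightarrow> 'a \<Rightarrow> 'a \<Rightarrow> 'a" where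
  "imp circ star a b = star (circ a (star b))"

definition iff :: "('a \<Rightarrow> 'a \<Rightarrow> 'a) \<Rightarrow> ('a \<Rightarrow> 'a \<Rightarrow> 'a) \<Rightarrow> ('a \<Rightarrow> 'a) \<Rightarrow> 'a \<Rightarrow> 'a \<Rightarrow> 'a" where
  "iff tens circ star a b = tens (imp circ star a b) (imp circ star b a)"

definition niff :: "('a \<Rightarrow> 'a \<Rightarrow> 'a) \<Rightarrow> ('a \<Rightarrow> 'a \<Rightarrow> 'a) \<Rightarrow> ('a \<Rightarrow> 'a) \<Rightarrow> 'a \<Rightarrow> 'a \<Rightarrow> 'a" where
  "niff tens circ star a b = star (iff tens circ star a b)"

definition niff3 :: "('a \<Rightarrow> 'a \<Rightarrow> 'a) \<Rightarrow> ('a \<Rightarrow> 'a \<Rightarrow> 'a) \<Rightarrow> ('a \<Rightarrow> 'a) \<Rightarrow> 'a \<Rightarrow> 'a \<Rightarrow> 'a \<Rightarrow> 'a" where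
  "niff3 tens circ star a b c =
     tens (tens (niff tens circ star a b) (niff tens circ star a c)) (niff tens circ star b c)"

text \<open>Weak N-algebra on the carrier given by the whole type 'a.\<close>
definition weak_N_algebra :: "('a \<Rightarrow> 'a \<Rightarrow> 'a) \<Rightarrow> ('a \<Rightarrow> 'a \<Rightarrow> 'a) \<Rightarrow> ('a \<Rightarrow> 'a) \<Rightarrow> bool" where
  "weak_N_algebra tens circ star \<longleftrightarrow>
     (\<forall>x y. tens x y = tens y x) \<and>
     (\<forall>x y. circ x y = circ y x) \<and>
     (\<forall>x. star (star x) = x) \<and>
     (\<forall>x y z. circ (tens x y) z = circ (tens x z) y)"

definition Nw_model ::
  "('a \<Rightarrow> 'a \<Rightarrow> 'a) \<Rightarrow> ('a \<Rightarrow> 'a \<Rightarrow> 'a) \<Rightarrow> ('a \<Rightarrow> 'a) \<Rightarrow> ('a ext \<Rightarrow> 'a ext \<Rightarrow> bool) \<Rightarrow> bool" where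
  "Nw_model tens circ star perp \<longleftrightarrow>
     weak_N_algebra tens circ star \<and>
     (\<forall>x. perp (Elem x) (Elem (star x))) \<and>
     (\<forall>x y. perp (Elem x) (Elem (star y)) \<and> perp (Elem y) (Elem (star x)) \<longrightarrow> x = y) \<and>
     (\<forall>x y. perp (Elem x) (Elem y) \<longleftrightarrow> perp (Elem (circ x y)) T) \<and>
     (\<forall>x. perp (Elem x) T \<longleftrightarrow> perp (Elem (star x)) F) \<and>
     (\<forall>x y. (perp (Elem x) F \<and> perp (Elem y) F) \<longleftrightarrow> perp (Elem (tens x y)) F) \<and>
     (\<forall>x y. perp (Elem (star (circ x (star y)))) (Elem (star (circ x y)))) \<and>
     (\<forall>x y. perp (Elem x) (Elem y) \<and> perp (Elem x) F \<longrightarrow> perp (Elem y) T) \<and>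
     (\<forall>x y z. perp (Elem (niff3 tens circ star x y z))
        (Elem (star (imp circ star (imp circ star x y)
                 (imp circ star (imp circ star y z) (imp circ star x z))))))"

datatype 'v form = Var 'v | Tens "'v form" "'v form" | Circ "'v form" "'v form" | Star "'v form"

definition fImp :: "'v form \<Rightarrow> 'v form \<Rightarrow> 'v form" where
  "fImp \<phi> \<psi> = Star (Circ \<phi> (Star \<psi>))"

definition is_hom :: "('a \<Rightarrow> 'a \<Rightarrow> 'a) \<Rightarrow> ('a \<Rightarrow> 'a \<Rightarrow> 'a) \<Rightarrow> ('a \<Rightarrow> 'a) \<Rightarrow> ('v form \<Rightarrow> 'a) \<Rightarrow> bool" where
  "is_hom tens circ star h \<longleftrightarrow>
     (\<forall>\<phi> \<psi>. h (Tens \<phi> \<psi>) = tens (h \<phi>) (h \<psi>)) \<and>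
     (\<forall>\<phi> \<psi>. h (Circ \<phi> \<psi>) = circ (h \<phi>) (h \<psi>)) \<and>
     (\<forall>\<phi>. h (Star \<phi>) = star (h \<phi>))"

end

theory Submission
  imports Defs
begin

text \<open>
  Validity of \<open>(a \<circ> b) \<Rightarrow> (a \<Rightarrow> b)\<close> says \<open>a \<circ> b \<perp> a \<circ> b\<^sup>*\<close>, and together with axiom (f)
  and the antisymmetry axiom (b) this forces \<open>a \<circ> b\<^sup>* = (a \<circ> b)\<^sup>*\<close>. From then on \<open>\<perp>\<close> on \<open>A\<close> is
  the graph of \<open>\<^sup>*\<close>, so \<open>a \<circ> b \<perp> f\<close> holds exactly when \<open>a = b\<close>. The exchange law turns this
  into \<open>a \<otimes> (a \<otimes> b) = b\<close>, whence all diagonal elements \<open>a \<circ> a\<close> coincide. Axiom (h), read as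
  an equation and evaluated at the triples \<open>(a, a, a)\<close>, \<open>(a, b, a)\<close> and \<open>(a, b, b)\<close>, then
  makes \<open>\<^sup>*\<close> the identity and finally yields \<open>a \<circ> b \<perp> f\<close>, i.e. \<open>a = b\<close>, for all \<open>a, b\<close>.
\<close>

text \<open>All axioms of an \<open>\<frak>N\<^sub>w\<close>-model except (g), which the argument never uses.\<close>

locale nw_model =
  fixes tens circ :: "'a \<Rightarrow> 'a \<Rightarrow> 'a" and star :: "'a \<Rightarrow> 'a"
    and perp :: "'a ext \<Rightarrow> 'a ext \<Rightarrow> bool"
  assumes tens_commute: "tens a b = tens b a"
    and circ_commute: "circ a b = circ b a"
    and star_star [simp]: "star (star a) = a"
    and circ_tens_exchange: "circ (tens a b) c = circ (tens a c) b"
    and perp_star: "perp (Elem a) (Elem (star a))"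
    and perp_star_antisym:
      "perp (Elem a) (Elem (star b)) \<Longrightarrow> perp (Elem b) (Elem (star a)) \<Longrightarrow> a = b"
    and perp_iff_circ_perp_T: "perp (Elem a) (Elem b) \<longleftrightarrow> perp (Elem (circ a b)) T"
    and perp_T_iff_star_perp_F: "perp (Elem a) T \<longleftrightarrow> perp (Elem (star a)) F"
    and tens_perp_F_iff: "perp (Elem (tens a b)) F \<longleftrightarrow> perp (Elem a) F \<and> perp (Elem b) F"
    and perp_imp_star_circ: "perp (Elem (star (circ a (star b)))) (Elem (star (circ a b)))"
    and perp_niff3_star_imp:
      "perp (Elem (niff3 tens circ star a b c))
         (Elem (star (imp circ star (imp circ star a b)
                  (imp circ star (imp circ star b c) (imp circ star a c)))))"

lemma nw_model_if_Nw_model: "Nw_model tens circ star perp \<Longrightarrow> nw_model tens circ star perp"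
  unfolding Nw_model_def weak_N_algebra_def nw_model_def by meson

context nw_model
begin

lemma star_inject [simp]: "star a = star b \<longleftrightarrow> a = b"
  by (metis star_star)

lemma star_circ_star_perp_F: "perp (Elem (star (circ a (star a)))) F"
  using perp_star perp_iff_circ_perp_T perp_T_iff_star_perp_F by blast

end

locale nw_model_circ_imp_valid = nw_model +
  assumes circ_imp_valid: "perp (Elem (imp circ star (circ a b) (imp circ star a b))) F"
begin

lemma circ_star_right: "circ a (star b) = star (circ a b)"
proof -
  have "circ a b = star (circ a (star b))" for a b
  proof -
    have "perp (Elem (star (circ (circ a b) (circ a (star b))))) F"
      using circ_imp_valid[of a b] by (simp add: imp_def)
    then have "perp (Elem (circ a b)) (Elem (star (star (circ a (star b)))))"
      by (simp add: perp_iff_circ_perp_T perp_T_iff_star_perp_F)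
    then show ?thesis
      using perp_imp_star_circ by (rule perp_star_antisym)
  qed
  from this[of a "star b"] show ?thesis
    by simp
qed

lemma perp_iff_eq_star: "perp (Elem a) (Elem b) \<longleftrightarrow> b = star a"
proof
  assume ab: "perp (Elem a) (Elem b)"
  have "circ (star b) (star a) = circ a b"
    by (metis circ_commute circ_star_right star_star)
  with ab have "perp (Elem (star b)) (Elem (star a))"
    by (simp add: perp_iff_circ_perp_T)
  with ab show "b = star a"
    using perp_star_antisym[of a "star b"] by simp
qed (simp add: perp_star)

lemma circ_perp_F_iff: "perp (Elem (circ a b)) F \<longleftrightarrow> a = b"
proof -
  have "perp (Elem (circ a b)) F \<longleftrightarrow> perp (Elem (circ a (star b))) T"
    by (simp add: perp_T_iff_star_perp_F circ_star_right)
  also have "\<dots> \<longleftrightarrow> a = b"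
    by (metis perp_iff_circ_perp_T perp_iff_eq_star star_star)
  finally show ?thesis .
qed

lemma imp_eq_circ: "imp circ star a b = circ a b"
  by (simp add: imp_def circ_star_right)

lemma niff_eq: "niff tens circ star a b = star (tens (circ a b) (circ a b))"
  by (simp add: niff_def iff_def imp_eq_circ circ_commute[of b a])

lemma niff_commute: "niff tens circ star a b = niff tens circ star b a"
  by (simp add: niff_eq circ_commute[of a b])

text \<open>Since \<open>\<perp>\<close> is the graph of \<open>\<^sup>*\<close>, axiom (h) is an equation.\<close>

lemma niff3_eq_circ: "niff3 tens circ star a b c = circ (circ a b) (circ (circ b c) (circ a c))"
  using perp_niff3_star_imp[of a b c] by (simp add: perp_iff_eq_star imp_eq_circ)

lemma tens_eq_iff_swap: "tens a b = c \<longleftrightarrow> tens a c = b"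
  by (metis circ_perp_F_iff circ_tens_exchange)

lemma tens_tens_cancel [simp]: "tens a (tens a b) = b"
  using tens_eq_iff_swap by blast

lemma circ_self_eq: "circ a a = circ b b"
proof -
  have "circ c c = circ (tens d c) (tens d c)" for c d
    using circ_tens_exchange[of d "tens d c" c] by simp
  from this[of a "tens a b"] show ?thesis
    by (simp add: tens_commute[of "tens a b"])
qed

lemma niff_self: "niff tens circ star a a = circ a a"
proof -
  let ?n = "niff tens circ star a a"
  have "tens (tens ?n ?n) ?n = niff3 tens circ star a a a"
    by (simp add: niff3_def)
  also have "\<dots> = circ a a"
    by (metis niff3_eq_circ circ_self_eq)
  finally show ?thesis
    by (simp add: tens_commute[of "tens ?n ?n"])
qed

lemma star_eq_self [simp]: "star a = a"
proof -
  have "perp (Elem (tens (circ a a) (circ a a))) F"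
    by (simp add: tens_perp_F_iff circ_perp_F_iff)
  moreover have "tens (circ a a) (circ a a) = circ a (star a)"
    by (metis niff_self niff_eq circ_star_right star_star)
  ultimately show ?thesis
    by (simp add: circ_perp_F_iff)
qed

lemma tens_circ_self: "tens (circ a a) (circ a a) = circ a a"
  using niff_self[of a] by (simp add: niff_eq)

lemma circ_circ_self: "circ (circ a b) (circ c c) = circ a b"
proof -
  let ?n = "niff tens circ star a b"
  have "circ (circ a b) (circ (circ a b) (circ a a)) = niff3 tens circ star a b a"
    by (simp add: niff3_eq_circ circ_commute[of b a])
  also have "\<dots> = tens (tens ?n (circ a a)) ?n"
    by (simp add: niff3_def niff_self niff_commute[of b a])
  also have "\<dots> = circ a a"
    by (metis tens_commute tens_tens_cancel)
  finally have "perp (Elem (circ (circ a b) (circ (circ a b) (circ a a)))) F"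
    by (simp add: circ_perp_F_iff)
  then show ?thesis
    by (simp add: circ_perp_F_iff circ_self_eq[of c a])
qed

lemma all_equal: "(a :: 'a) = b"
proof -
  define e where "e = circ a a"
  define r where "r = tens (circ a b) (circ a b)"
  have "tens (tens r r) e = niff3 tens circ star a b b"
    by (simp add: niff3_def niff_eq r_def e_def tens_circ_self circ_self_eq[of b a])
  also have "\<dots> = e"
    by (simp add: niff3_eq_circ circ_commute[of "circ b b"] circ_circ_self e_def
        circ_self_eq[of "circ a b" a])
  finally have "tens r r = tens e e"
    by (metis tens_commute tens_eq_iff_swap)
  also have "\<dots> = e"
    by (simp add: e_def tens_circ_self)
  finally have "perp (Elem (tens r r)) F"
    by (simp add: e_def circ_perp_F_iff)
  then show ?thesis
    by (simp add: r_def tens_perp_F_iff circ_perp_F_iff)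
qed

end

primrec eval_form ::
  "('a \<Rightarrow> 'a \<Rightarrow> 'a) \<Rightarrow> ('a \<Rightarrow> 'a \<Rightarrow> 'a) \<Rightarrow> ('a \<Rightarrow> 'a) \<Rightarrow> ('v \<Rightarrow> 'a) \<Rightarrow> 'v form \<Rightarrow> 'a" where
  "eval_form tens circ star v (Var z) = v z"
| "eval_form tens circ star v (Tens \<phi> \<psi>) =
     tens (eval_form tens circ star v \<phi>) (eval_form tens circ star v \<psi>)"
| "eval_form tens circ star v (Circ \<phi> \<psi>) =
     circ (eval_form tens circ star v \<phi>) (eval_form tens circ star v \<psi>)"
| "eval_form tens circ star v (Star \<phi>) = star (eval_form tens circ star v \<phi>)"

lemma is_hom_eval_form: "is_hom tens circ star (eval_form tens circ star v)"
  by (simp add: is_hom_def)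

lemma eval_form_fImp:
  "eval_form tens circ star v (fImp \<phi> \<psi>) =
     imp circ star (eval_form tens circ star v \<phi>) (eval_form tens circ star v \<psi>)"
  by (simp add: fImp_def imp_def)

theorem proposition4p12:
  fixes tens circ :: "'a \<Rightarrow> 'a \<Rightarrow> 'a" and star :: "'a \<Rightarrow> 'a"
    and perp :: "'a ext \<Rightarrow> 'a ext \<Rightarrow> bool" and x y :: 'v
  assumes "Nw_model tens circ star perp"
    and "x \<noteq> y"
  shows "(\<forall>h :: 'v form \<Rightarrow> 'a. is_hom tens circ star h \<longrightarrow>
            perp (Elem (h (fImp (Circ (Var x) (Var y)) (fImp (Var x) (Var y))))) F)
         \<longleftrightarrow> card (UNIV :: 'a set) = 1"
proof -
  interpret nw_model tens circ star perp
    using assms(1) by (rule nw_model_if_Nw_model)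
  show ?thesis
  proof
    assume valid: "\<forall>h :: 'v form \<Rightarrow> 'a. is_hom tens circ star h \<longrightarrow>
              perp (Elem (h (fImp (Circ (Var x) (Var y)) (fImp (Var x) (Var y))))) F"
    have "perp (Elem (imp circ star (circ a b) (imp circ star a b))) F" for a b
      using valid[rule_format, OF is_hom_eval_form[where v = "\<lambda>z. if z = x then a else b"]]
        \<open>x \<noteq> y\<close>
      by (simp add: eval_form_fImp)
    then interpret nw_model_circ_imp_valid tens circ star perp
      by unfold_locales
    show "card (UNIV :: 'a set) = 1"
      using all_equal by (auto simp: card_1_singleton_iff)
  next
    assume "card (UNIV :: 'a set) = 1"
    then obtain a :: 'a where "UNIV = {a}"
      using card_1_singletonE by blast
    then show "\<forall>h :: 'v form \<Rightarrow> 'a. is_hom tens circ star h \<longrightarrow>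
              perp (Elem (h (fImp (Circ (Var x) (Var y)) (fImp (Var x) (Var y))))) F"
      using star_circ_star_perp_F[of a] by (metis UNIV_I singletonD)
  qed
qed

end
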